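(* (i) $u_2u_1s_2^{-1}s_1s_2^{-1}\subset u_1\omega^{-2}+R_5s_2^{-2}s_1^2s_2^{-1}s_1s_2^{-1}+u_1u_2u_1u_2u_1\subset U''$. (ii) $u_2u_1s_2s_1^{-1}s_2\subset u_1\omega^{2}+R_5s_2^{2}s_1^{-2}s_2s_1^{-1}s_2+u_1u_2u_1u_2u_1\subset U''$.
   Context: Let $B_3=\langle s_1,s_2\mid s_1s_2s_1=s_2s_1s_2\rangle$, $R_5=\mathbb{Z}[a,b,c,d,e,e^{-1}]$, and let $H_5$ be the quotient of the group algebra $R_5B_3$ by the relations $s_i^5=as_i^4+bs_i^3+cs_i^2+ds_i+e$ for $i=1,2$; identify $s_i$ with their images. For $i=1,2$ let $u_i$ be the $R_5$-subalgebra of $H_5$ generated by $s_i$. Set $\omega=s_2s_1^2s_2$. For $R_5$-submodules (or elements) $X_1,\dots,X_n$, $X_1\cdots X_n$ denotes the $R_5$-submodule spanned by products $x_1\cdots x_n$, $x_j\in X_j$; sums are sums of submodules; $R_5x$ is the submodule spanned by $x$. Define $U'=u_1u_2u_1+u_1\omega+u_1\omega^{-1}+u_1s_2^{-1}s_1^2s_2^{-1}u_1+u_1s_2s_1^{-2}s_2u_1+u_1s_2^2s_1^2s_2^2u_1+u_1s_2^{-2}s_1^{-2}s_2^{-2}u_1+u_1s_2s_1^{-2}s_2^2u_1+u_1s_2^{-1}s_1^2s_2^{-2}u_1+u_1s_2^{-1}s_1s_2^{-1}u_1+u_1s_2s_1^{-1}s_2u_1+u_1s_2^{-2}s_1^{-2}s_2^2u_1+u_1s_2^2s_1^2s_2^{-2}u_1+u_1s_2^2s_1^{-2}s_2^2u_1+u_1s_2^{-2}s_1^2s_2^{-2}u_1+u_1s_2^{-2}s_1s_2^{-1}u_1+u_1s_2^{-1}s_1s_2^{-2}u_1$;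 $U''=U'+u_1\omega^2+u_1\omega^{-2}+u_1s_2^{-2}s_1^2s_2^{-1}s_1s_2^{-1}u_1+u_1s_2^2s_1^{-2}s_2s_1^{-1}s_2u_1+u_1s_2s_1^{-2}s_2^2s_1^{-2}s_2^2u_1+u_1s_2^{-1}s_1^2s_2^{-2}s_1^2s_2^{-2}u_1$. *)

theory Defs
  imports Complex_Main
begin

definition is_algebra :: "('r::comm_ring_1 \<Rightarrow> 'a::ring_1 \<Rightarrow> 'a) \<Rightarrow> bool" where
  "is_algebra sc \<longleftrightarrow> module sc \<and>
     (\<forall>r x y. sc r (x * y) = sc r x * y \<and> sc r (x * y) = x * sc r y)"

definition mprod :: "('r::comm_ring_1 \<Rightarrow> 'a::ring_1 \<Rightarrow> 'a) \<Rightarrow> 'a set \<Rightarrow> 'a set \<Rightarrow> 'a set" where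
  "mprod sc X Y = module.span sc {x * y | x y. x \<in> X \<and> y \<in> Y}"

definition msum :: "'a::ring_1 set \<Rightarrow> 'a set \<Rightarrow> 'a set" where
  "msum X Y = {x + y | x y. x \<in> X \<and> y \<in> Y}"

definition ugen :: "('r::comm_ring_1 \<Rightarrow> 'a::ring_1 \<Rightarrow> 'a) \<Rightarrow> 'a \<Rightarrow> 'a set" where
  "ugen sc s = module.span sc (range (\<lambda>n::nat. s ^ n))"

definition sand :: "('r::comm_ring_1 \<Rightarrow> 'a::ring_1 \<Rightarrow> 'a) \<Rightarrow> 'a set \<Rightarrow> 'a \<Rightarrow> 'a set \<Rightarrow> 'a set" where
  "sand sc X x Y = mprod sc (mprod sc X {x}) Y"

definition H5_setting :: "('r::comm_ring_1 \<Rightarrow> 'a::ring_1 \<Rightarrow> 'a) \<Rightarrow> 'r \<Rightarrow> 'r \<Rightarrow> 'r \<Rightarrow> 'r \<Rightarrow> 'r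
    \<Rightarrow> 'a \<Rightarrow> 'a \<Rightarrow> 'a \<Rightarrow> 'a \<Rightarrow> bool" where
  "H5_setting sc a b c d e s1 s2 t1 t2 \<longleftrightarrow> is_algebra sc \<and>
     (\<exists>e'. e * e' = 1) \<and>
     s1 * t1 = 1 \<and> t1 * s1 = 1 \<and> s2 * t2 = 1 \<and> t2 * s2 = 1 \<and>
     s1 * s2 * s1 = s2 * s1 * s2 \<and>
     (\<forall>s\<in>{s1, s2}. s ^ 5 = sc a (s ^ 4) + sc b (s ^ 3) + sc c (s ^ 2) + sc d s + sc e 1)"

definition Uprime :: "('r::comm_ring_1 \<Rightarrow> 'a::ring_1 \<Rightarrow> 'a) \<Rightarrow> 'a \<Rightarrow> 'a \<Rightarrow> 'a \<Rightarrow> 'a \<Rightarrow> 'a set" where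
  "Uprime sc s1 s2 t1 t2 =
    (let u1 = ugen sc s1; u2 = ugen sc s2;
         w = s2 * s1^2 * s2; wi = t2 * t1^2 * t2;
         f = (\<lambda>x. sand sc u1 x u1)
     in foldr msum
       [ mprod sc (mprod sc u1 u2) u1,
         mprod sc u1 {w},
         mprod sc u1 {wi},
         f (t2 * s1^2 * t2),
         f (s2 * t1^2 * s2),
         f (s2^2 * s1^2 * s2^2),
         f (t2^2 * t1^2 * t2^2),
         f (s2 * t1^2 * s2^2),
         f (t2 * s1^2 * t2^2),
         f (t2 * s1 * t2),
         f (s2 * t1 * s2),
         f (t2^2 * t1^2 * s2^2),
         f (s2^2 * s1^2 * t2^2),
         f (s2^2 * t1^2 * s2^2),
         f (t2^2 * s1^2 * t2^2),
         f (t2^2 * s1 * t2),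
         f (t2 * s1 * t2^2) ] {0})"

definition Udprime :: "('r::comm_ring_1 \<Rightarrow> 'a::ring_1 \<Rightarrow> 'a) \<Rightarrow> 'a \<Rightarrow> 'a \<Rightarrow> 'a \<Rightarrow> 'a \<Rightarrow> 'a set" where
  "Udprime sc s1 s2 t1 t2 =
    (let u1 = ugen sc s1;
         w = s2 * s1^2 * s2; wi = t2 * t1^2 * t2;
         f = (\<lambda>x. sand sc u1 x u1)
     in foldr msum
       [ Uprime sc s1 s2 t1 t2,
         mprod sc u1 {w^2},
         mprod sc u1 {wi^2},
         f (t2^2 * s1^2 * t2 * s1 * t2),
         f (s2^2 * t1^2 * s2 * t1 * s2),
         f (s2 * t1^2 * s2^2 * t1^2 * s2^2),
         f (t2 * s1^2 * t2^2 * s1^2 * t2^2) ] {0})"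

end

theory Submission
  imports Defs
begin

text \<open>Every element of the left-hand sides is a combination of words \<open>s2\<^sup>k s1\<^sup>j y\<close> (and, for
  \<open>u1 u2 u1 u2 u1 \<subseteq> U'\<close>, of words \<open>s1\<^sup>i s2\<^sup>j s1\<^sup>k s2\<^sup>l s1\<^sup>m\<close>). The quintic relation, whose constant term
  is a unit, expresses any power \<open>s\<^sup>n\<close>, \<open>n \<in> \<int>\<close>, through five consecutive ones, so it suffices
  to treat exponents in the window \<open>-2..2\<close>. Each of these finitely many words is rewritten, using
  the braid relation and further applications of the quintic relation, into a combination of words
  that lie visibly in the target; equality in the braid group is decided by a normal form in
  terms of \<open>\<Delta> = s1 s2 s1\<close>.\<close>

section \<open>Braid words and a normal form\<close>

text \<open>Braid words are lists of integers: \<open>1, 2\<close> stand for \<open>s1, s2\<close> and \<open>-1, -2\<close> for their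
  inverses; \<open>gen_pow g n\<close> is the word of \<open>s\<^sub>g\<^sup>n\<close> for an integer \<open>n\<close>.\<close>

definition gen_pow :: "int \<Rightarrow> int \<Rightarrow> int list" where
  "gen_pow g n = (if 0 \<le> n then replicate (nat n) g else replicate (nat (-n)) (-g))"

definition is_letter1 :: "int \<Rightarrow> bool" where "is_letter1 x \<longleftrightarrow> x = 1 \<or> x = -1"
definition is_letter2 :: "int \<Rightarrow> bool" where "is_letter2 x \<longleftrightarrow> x = 2 \<or> x = -2"

definition swap12 :: "int \<Rightarrow> int" where
  "swap12 x = (if x = 1 then 2 else if x = 2 then 1 else if x = -1 then -2 else if x = -2 then -1 else x)"

lemma swap12_swap12 [simp]: "swap12 (swap12 x) = x"
  by (simp add: swap12_def)

text \<open>A normal-form state \<open>(k, R)\<close> stands for \<open>\<Delta>\<^sup>k\<close> times the word \<open>R\<close> read backwards, where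
  \<open>\<Delta> = s1 s2 s1\<close>. A completed factor \<open>s1 s2 s1\<close> or \<open>s2 s1 s2\<close> is replaced by \<open>\<Delta>\<close>, which is moved to
  the front at the price of swapping \<open>1 \<leftrightarrow> 2\<close>; an inverse letter is rewritten via
  \<open>s1\<^sup>-\<^sup>1 = \<Delta>\<^sup>-\<^sup>1 s1 s2\<close> and \<open>s2\<^sup>-\<^sup>1 = \<Delta>\<^sup>-\<^sup>1 s2 s1\<close>.\<close>

definition nf_push :: "int \<times> int list \<Rightarrow> int \<Rightarrow> int \<times> int list" where
  "nf_push st x = (case st of (k, R) \<Rightarrow> (case x # R of
       y # z # y' # R' \<Rightarrow>
         if y = y' \<and> y \<noteq> z \<and> y \<in> {1,2} \<and> z \<in> {1,2} then (k + 1, map swap12 R') else (k, x # R)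
     | _ \<Rightarrow> (k, x # R)))"

definition nf_step :: "int \<times> int list \<Rightarrow> int \<Rightarrow> int \<times> int list" where
  "nf_step st x =
     (if x = 1 \<or> x = 2 then nf_push st x
      else if x = -1 \<or> x = -2 then
        (case st of (k, R) \<Rightarrow> nf_push (nf_push (k - 1, map swap12 R) (-x)) (3 + x))
      else st)"

definition braid_nf :: "int list \<Rightarrow> int \<times> int list" where
  "braid_nf w = foldl nf_step (0, []) w"

text \<open>A certificate that \<open>w\<close> lies in the span of the words accepted by \<open>basic\<close>: either \<open>w\<close> equals
  such a word in the braid group, or \<open>w = u s\<^sub>g\<^sup>n v\<close> and the five words \<open>u s\<^sub>g\<^sup>j v\<close>, \<open>m \<le> j \<le> m + 4\<close>,
  are certified, so that the quintic relation reaches every exponent.\<close>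

datatype cert = Base "int list" | Window "int list" int int "int list" int cert cert cert cert cert

fun certifies :: "(int list \<Rightarrow> bool) \<Rightarrow> int list \<Rightarrow> cert \<Rightarrow> bool" where
  "certifies basic w (Base w') \<longleftrightarrow> basic w' \<and> braid_nf w = braid_nf w'"
| "certifies basic w (Window u g n v m c0 c1 c2 c3 c4) \<longleftrightarrow>
     (g = 1 \<or> g = 2) \<and> braid_nf w = braid_nf (u @ gen_pow g n @ v)
     \<and> certifies basic (u @ gen_pow g m @ v) c0 \<and> certifies basic (u @ gen_pow g (m + 1) @ v) c1
     \<and> certifies basic (u @ gen_pow g (m + 2) @ v) c2 \<and> certifies basic (u @ gen_pow g (m + 3) @ v) c3
     \<and> certifies basic (u @ gen_pow g (m + 4) @ v) c4"

definition strip1 :: "int list \<Rightarrow> int list" where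
  "strip1 w = rev (dropWhile is_letter1 (rev (dropWhile is_letter1 w)))"

fun u1u2_word :: "nat \<Rightarrow> int list \<Rightarrow> bool" where
  "u1u2_word 0 w = list_all is_letter1 w"
| "u1u2_word (Suc k) w = u1u2_word k (dropWhile is_letter2 (dropWhile is_letter1 w))"

lemma list_all_takeWhile: "list_all P (takeWhile P xs)"
  by (simp add: list_all_iff) (meson set_takeWhileD)

lemma strip1_split:
  obtains p q where "w = p @ strip1 w @ q" "list_all is_letter1 p" "list_all is_letter1 q"
proof
  let ?w = "dropWhile is_letter1 w"
  show "w = takeWhile is_letter1 w @ strip1 w @ rev (takeWhile is_letter1 (rev ?w))"
    unfolding strip1_def by (metis rev_append rev_rev_ident takeWhile_dropWhile_id)
qed (simp_all add: list_all_takeWhile)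

lemma u1u2_word_2_split:
  assumes "u1u2_word 2 w"
  obtains a1 b1 a2 b2 a3 where "w = a1 @ b1 @ a2 @ b2 @ a3"
    "list_all is_letter1 a1" "list_all is_letter2 b1" "list_all is_letter1 a2"
    "list_all is_letter2 b2" "list_all is_letter1 a3"
proof
  let ?x1 = "dropWhile is_letter1 w" let ?x2 = "dropWhile is_letter2 ?x1"
  let ?x3 = "dropWhile is_letter1 ?x2"
  show "w = takeWhile is_letter1 w @ takeWhile is_letter2 ?x1 @ takeWhile is_letter1 ?x2
      @ takeWhile is_letter2 ?x3 @ dropWhile is_letter2 ?x3" by simp
  show "list_all is_letter1 (dropWhile is_letter2 ?x3)"
    using assms by (simp add: numeral_2_eq_2)
qed (simp_all add: list_all_takeWhile)

text \<open>The words \<open>x\<close> of the summands \<open>u\<^sub>1 x u\<^sub>1\<close> of \<open>U'\<close>.\<close>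

definition Uprime_cores :: "int list list" where
  "Uprime_cores = [[-2,1,1,-2], [2,-1,-1,2], [2,2,1,1,2,2], [-2,-2,-1,-1,-2,-2], [2,-1,-1,2,2],
     [-2,1,1,-2,-2], [-2,1,-2], [2,-1,2], [-2,-2,-1,-1,2,2], [2,2,1,1,-2,-2], [2,2,-1,-1,2,2],
     [-2,-2,1,1,-2,-2], [-2,-2,1,-2], [-2,1,-2,-2]]"

definition Uprime_basic :: "int list \<Rightarrow> bool" where
  "Uprime_basic w \<longleftrightarrow> strip1 w \<in> {[2,1,1,2], [-2,-1,-1,-2]} \<or> strip1 w \<in> set Uprime_cores
     \<or> list_all is_letter2 (strip1 w)"

definition prop44_basic :: "int list \<Rightarrow> int list \<Rightarrow> int list \<Rightarrow> bool" where
  "prop44_basic z x w \<longleftrightarrow> u1u2_word 2 w \<or> strip1 w = z \<or> w = x"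

lemma braid_nf_omega_commute:
  "z \<in> {[2,1,1,2], [-2,-1,-1,-2]} \<Longrightarrow> is_letter1 x \<Longrightarrow> braid_nf (z @ [x]) = braid_nf (x # z)"
  unfolding is_letter1_def by (elim insertE disjE emptyE; hypsubst; code_simp)

text \<open>Certificates found by a computer search, checked below by evaluation.\<close>

definition Uprime_certs :: "((int \<times> int \<times> int) \<times> cert) list" where
  "Uprime_certs = [(((-2), (-2), (-2)), (Base [-2, -2, -1, -1, -2, -2])),
  (((-2), (-2), (-1)), (Window [] 2 (-2) [-1, -1, -2] (-1) (Base [-2, -1, -1, -2]) (Base [-1, -1, -2]) (Base [-1, -2, -2, 1]) (Base [-1, -2, 1, -2, 1]) (Base [-1, -2, 1, 1, -2, 1]))),
  (((-2), (-2), 0), (Base [-2, -2, -1, -1])),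
  (((-2), (-2), 1), (Base [-2, 1, -2, -2, -1])),
  (((-2), (-2), 2), (Base [-2, -2, -1, -1, 2, 2])),
  (((-2), (-1), (-2)), (Base [-1, -1, -1, -1, -2, -1, -1, -2, 1, 1, 1])),
  (((-2), (-1), (-1)), (Base [-1, -2, -1, -1])),
  (((-2), (-1), 0), (Base [-2, -2, -1])),
  (((-2), (-1), 1), (Base [-2, 1, -2, -1])),
  (((-2), (-1), 2), (Base [-2, 1, 1, -2, -1])),
  (((-2), 0, (-2)), (Base [-2, -2, -2, -2])),
  (((-2), 0, (-1)), (Base [-2, -2, -2])),
  (((-2), 0, 0), (Base [-2, -2])),
  (((-2), 0, 1), (Base [-2])),
  (((-2), 0, 2), (Base [])),
  (((-2), 1, (-2)), (Window [-2, -2, -2] 1 (-2) [2, 1] (-1) (Base [-2, -2, 1, -2, -1, 1]) (Base [-2, -2, 1]) (Base [1, 2, -1, -1, -1, 1]) (Base [1, 2, -1, -1, 2, -1, 1]) (Base [1, 2, -1, -1, 2, 2, -1, 1]))),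
  (((-2), 1, (-1)), (Base [-2, -2, 1, -2])),
  (((-2), 1, 0), (Base [-2, -2, 1])),
  (((-2), 1, 1), (Base [1, 2, -1, -1])),
  (((-2), 1, 2), (Base [1, 2, -1, -1, 2])),
  (((-2), 2, (-2)), (Base [-2, -2, 1, 1, -2, -2])),
  (((-2), 2, (-1)), (Window [-2, -2, -2, -1] 2 2 [1] (-3) (Window [] 2 (-3) [-1, -2, -2, -2, 1] (-2) (Window [1] 2 (-2) [-1, -1, -2, -1, -1, 1] (-1) (Base [1, -2, -1, -1, -2, -1, -1, 1]) (Base [1, -1, -1, -2, -1, -1, 1]) (Base [1, -1, -2, -2, 1, -1, -1, 1]) (Base [1, -1, -2, 1, -2, 1, -1, -1, 1]) (Base [1, -1, -2, 1, 1, -2, 1, -1, -1, 1])) (Base [-1, -1, -1, -2, -1, 1]) (Base [-1, -2, -2, -2, 1]) (Base [-1, -2, 1, -2, -2, 1]) (Base [-1, -2, 1, 1, -2, -2, 1])) (Window [] 2 (-2) [-1, -1, -2, -1, 1] (-1) (Base [-2, -1, -1, -2, -1, 1]) (Base [-1, -1, -2, -1, 1]) (Base [-1, -2, -2, 1, -1, 1]) (Base [-1, -2, 1, -2, 1, -1, 1]) (Base [-1, -2, 1, 1, -2, 1, -1, 1])) (Base [-1, -2, -1, -1, -1, 1]) (Base [-2, -2, -2, -1, 1]) (Base [-2, -2, 1, -2, -1, 1]))),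
  (((-2), 2, 0), (Base [-2, -2, 1, 1])),
  (((-2), 2, 1), (Base [1, 2, -1, 2, -1])),
  (((-2), 2, 2), (Base [1, 2, 2, 1, 1, -2, -2, -1])),
  (((-1), (-2), (-2)), (Window [1, 1] 2 (-2) [-1, -1, -2, -1, -1] (-1) (Base [1, 1, -2, -1, -1, -2, -1, -1]) (Base [1, 1, -1, -1, -2, -1, -1]) (Base [1, 1, -1, -2, -2, 1, -1, -1]) (Base [1, 1, -1, -2, 1, -2, 1, -1, -1]) (Base [1, 1, -1, -2, 1, 1, -2, 1, -1, -1]))),
  (((-1), (-2), (-1)), (Base [-2, -1, -1, -2])),
  (((-1), (-2), 0), (Base [-2, -1, -1])),
  (((-1), (-2), 1), (Base [1, -2, -2, -1])),
  (((-1), (-2), 2), (Base [1, -2, 1, -2, -1])),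
  (((-1), (-1), (-2)), (Base [-1, -1, -2, -1])),
  (((-1), (-1), (-1)), (Base [-1, -2, -1])),
  (((-1), (-1), 0), (Base [-2, -1])),
  (((-1), (-1), 1), (Base [1, -2, -1])),
  (((-1), (-1), 2), (Base [1, 1, -2, -1])),
  (((-1), 0, (-2)), (Base [-2, -2, -2])),
  (((-1), 0, (-1)), (Base [-2, -2])),
  (((-1), 0, 0), (Base [-2])),
  (((-1), 0, 1), (Base [])),
  (((-1), 0, 2), (Base [2])),
  (((-1), 1, (-2)), (Base [-2, 1, -2, -2])),
  (((-1), 1, (-1)), (Base [-2, 1, -2])),
  (((-1), 1, 0), (Base [-2, 1])),
  (((-1), 1, 1), (Base [1, 2, -1])),
  (((-1), 1, 2), (Base [1, 2, -1, 2])),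
  (((-1), 2, (-2)), (Base [-2, 1, 1, -2, -2])),
  (((-1), 2, (-1)), (Base [-2, 1, 1, -2])),
  (((-1), 2, 0), (Base [-2, 1, 1])),
  (((-1), 2, 1), (Base [1, 2, 2, -1])),
  (((-1), 2, 2), (Window [1] 2 2 [-1, 2] (-3) (Base [1, -2, -2, 1, -2, -1]) (Base [1, -2, 1, -2, -1]) (Base [1, 1, -2, -1]) (Base [1, -1, 2]) (Base [1, 2, -1, 2]))),
  ((0, (-2), (-2)), (Base [-1, -1, -2, -2])),
  ((0, (-2), (-1)), (Base [-1, -1, -2])),
  ((0, (-2), 0), (Base [-1, -1, -1, -1, 1, 1])),
  ((0, (-2), 1), (Base [-1, -1, 2])),
  ((0, (-2), 2), (Base [-1, -1, 2, 2])),
  ((0, (-1), (-2)), (Base [-1, -2, -2])),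
  ((0, (-1), (-1)), (Base [-1, -2])),
  ((0, (-1), 0), (Base [-1, -1, -1, -1, 1, 1, 1])),
  ((0, (-1), 1), (Base [-1, 2])),
  ((0, (-1), 2), (Base [-1, 2, 2])),
  ((0, 0, (-2)), (Base [-2, -2])),
  ((0, 0, (-1)), (Base [-2])),
  ((0, 0, 0), (Base [])),
  ((0, 0, 1), (Base [2])),
  ((0, 0, 2), (Base [2, 2])),
  ((0, 1, (-2)), (Base [1, -2, -2])),
  ((0, 1, (-1)), (Base [1, -2])),
  ((0, 1, 0), (Base [-1, -1, -1, 1, 1, 1, 1])),
  ((0, 1, 1), (Base [1, 2])),
  ((0, 1, 2), (Base [1, 2, 2])),
  ((0, 2, (-2)), (Base [1, 1, -2, -2])),
  ((0, 2, (-1)), (Base [1, 1, -2])),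
  ((0, 2, 0), (Base [-1, -1, 1, 1, 1, 1])),
  ((0, 2, 1), (Base [1, 1, 2])),
  ((0, 2, 2), (Base [1, 1, 2, 2])),
  ((1, (-2), (-2)), (Base [-1, -2, -2, 1, -2])),
  ((1, (-2), (-1)), (Base [-1, -2, -2, 1])),
  ((1, (-2), 0), (Base [2, -1, -1])),
  ((1, (-2), 1), (Base [2, -1, -1, 2])),
  ((1, (-2), 2), (Base [2, -1, -1, 2, 2])),
  ((1, (-1), (-2)), (Base [-1, -2, 1, -2])),
  ((1, (-1), (-1)), (Base [-1, -2, 1])),
  ((1, (-1), 0), (Base [2, -1])),
  ((1, (-1), 1), (Base [2, -1, 2])),
  ((1, (-1), 2), (Window [] 2 2 [1, 1, -2, -1] (-3) (Window [-2, -2, -2] 1 2 [-2, -1] (-3) (Window [] 2 (-4) [-1, -2, -2, -2, 1, -1] (-2) (Window [1] 2 (-2) [-1, -1, -2, -1, -1, 1, -1] (-1) (Base [1, -2, -1, -1, -2, -1, -1, 1, -1]) (Base [1, -1, -1, -2, -1, -1, 1, -1]) (Base [1, -1, -2, -2, 1, -1, -1, 1, -1]) (Base [1, -1, -2, 1, -2, 1, -1, -1, 1, -1]) (Base [1, -1, -2, 1, 1, -2, 1, -1, -1, 1, -1])) (Base [-1, -1, -1, -2, -1, 1, -1]) (Base [-1, -2, -2, -2, 1, -1]) (Base [-1, -2, 1, -2, -2, 1, -1]) (Base [-1, -2, 1, 1, -2, -2, 1, -1])) (Window [] 2 (-3) [-1, -1, -2, -1] (-1) (Base [-2, -1, -1,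 -2, -1]) (Base [-1, -1, -2, -1]) (Base [-1, -2, -2, 1, -1]) (Base [-1, -2, 1, -2, 1, -1]) (Base [-1, -2, 1, 1, -2, 1, -1])) (Base [-1, -2, -1, -1, -1, -1]) (Base [-2, -2, -2, -2, -1]) (Window [] 2 (-4) [-1, 2, 1, -1] (-3) (Base [-2, -2, 1, -2, -1, 1, -1]) (Base [-2, 1, -2, -1, 1, -1]) (Base [1, -2, -1, 1, -1]) (Base [-1, 2, 1, -1]) (Base [2, -1, 2, 1, -1]))) (Window [-2, -2, -2, -1] 2 2 [1, -1] (-3) (Window [] 2 (-3) [-1, -2, -2, -2, 1, -1] (-2) (Window [1] 2 (-2) [-1, -1, -2, -1, -1, 1, -1] (-1) (Base [1, -2, -1, -1, -2, -1, -1, 1, -1]) (Base [1, -1, -1, -2, -1, -1, 1, -1]) (Base [1, -1, -2, -2, 1, -1, -1, 1, -1]) (Base [1, -1, -2, 1, -2, 1, -1, -1, 1, -1]) (Base [1, -1, -2, 1, 1, -2, 1, -1, -1, 1, -1])) (Base [-1, -1, -1, -2, -1, 1, -1]) (Base [-1, -2, -2, -2, 1, -1]) (Base [-1, -2, 1, -2, -2, 1, -1]) (Base [-1, -2, 1, 1, -2, -2, 1, -1])) (Window [] 2 (-2) [-1, -1, -2, -1, 1, -1] (-1) (Base [-2, -1, -1, -2, -1, 1, -1]) (Base [-1, -1, -2, -1, 1, -1]) (Base [-1, -2, -2, 1, -1, 1, -1]) (Base [-1, -2, 1, -2, 1, -1, 1, -1]) (Base [-1, -2, 1, 1, -2, 1,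 -1, 1, -1])) (Base [-1, -2, -1, -1, -1, 1, -1]) (Base [-2, -2, -2, -1, 1, -1]) (Base [-2, -2, 1, -2, -1, 1, -1])) (Base [-2, 1, 1, -2, -1]) (Base [1, 1, -2, -1]) (Base [-1, 2, 2, 1, -1]))),
  ((1, 0, (-2)), (Base [-2])),
  ((1, 0, (-1)), (Base [])),
  ((1, 0, 0), (Base [2])),
  ((1, 0, 1), (Base [2, 2])),
  ((1, 0, 2), (Base [2, 2, 2])),
  ((1, 1, (-2)), (Base [-1, -1, 2, 1])),
  ((1, 1, (-1)), (Base [-1, 2, 1])),
  ((1, 1, 0), (Base [2, 1])),
  ((1, 1, 1), (Base [1, 2, 1])),
  ((1, 1, 2), (Base [1, 1, 2, 1])),
  ((1, 2, (-2)), (Base [-1, 2, -1, 2, 1])),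
  ((1, 2, (-1)), (Base [-1, 2, 2, 1])),
  ((1, 2, 0), (Base [2, 1, 1])),
  ((1, 2, 1), (Base [2, 1, 1, 2])),
  ((1, 2, 2), (Window [-1, -1] 2 3 [1, 2, 2, 1] (-2) (Base [-1, -1, 1, 2, -1, -1, 2, 1]) (Base [-1, -1, 1, 2, -1, 2, 1]) (Base [-1, -1, 1, 2, 2, 1]) (Base [-1, -1, 1, 1, 2, 1, 1]) (Base [-1, -1, -1, -1, -1, 2, 1, 1, 2, 1, 1, 1, 1, 1]))),
  ((2, (-2), (-2)), (Base [-1, -2, -2, -1, -1, 2, 2, 1])),
  ((2, (-2), (-1)), (Base [-1, -2, 1, -2, 1])),
  ((2, (-2), 0), (Base [2, 2, -1, -1])),
  ((2, (-2), 1), (Window [] 2 2 [-1, -1, 2] (-3) (Window [-2, -2, -2] 1 (-2) [2] (-1) (Base [-2, -2, 1, -2, -1]) (Base [-2, -2]) (Base [1, 2, -1, -1, -1]) (Base [1, 2, -1, -1, 2, -1]) (Base [1, 2, -1, -1, 2, 2, -1])) (Base [-2, 1, -2, -2, -1]) (Base [1, -2, -2, -1]) (Base [-1, -1, 2]) (Base [2, -1, -1, 2]))),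
  ((2, (-2), 2), (Base [2, 2, -1, -1, 2, 2])),
  ((2, (-1), (-2)), (Base [-1, -2, 1, 1, -2])),
  ((2, (-1), (-1)), (Base [-1, -2, 1, 1])),
  ((2, (-1), 0), (Base [2, 2, -1])),
  ((2, (-1), 1), (Window [] 2 2 [-1, 2] (-3) (Base [-2, -2, 1, -2, -1]) (Base [-2, 1, -2, -1]) (Base [1, -2, -1]) (Base [-1, 2]) (Base [2, -1, 2]))),
  ((2, (-1), 2), (Window [] 2 3 [1, 1, -2, -1] (-3) (Window [-2, -2, -2] 1 2 [-2, -1] (-3) (Window [] 2 (-4) [-1, -2, -2, -2, 1, -1] (-2) (Window [1] 2 (-2) [-1, -1, -2, -1, -1, 1, -1] (-1) (Base [1, -2, -1, -1, -2, -1, -1, 1, -1]) (Base [1, -1, -1, -2, -1, -1, 1, -1]) (Base [1, -1, -2, -2, 1, -1, -1, 1, -1]) (Base [1, -1, -2, 1, -2, 1, -1, -1, 1, -1]) (Base [1, -1, -2, 1, 1, -2, 1, -1, -1, 1, -1])) (Base [-1, -1, -1, -2, -1, 1, -1]) (Base [-1, -2, -2, -2, 1, -1]) (Base [-1, -2, 1, -2, -2, 1, -1]) (Base [-1, -2, 1, 1, -2, -2, 1, -1])) (Window [] 2 (-3) [-1, -1, -2, -1] (-1) (Base [-2, -1, -1, -2, -1]) (Base [-1, -1, -2, -1]) (Base [-1, -2, -2, 1, -1]) (Base [-1, -2, 1, -2, 1, -1]) (Base [-1, -2, 1, 1, -2, 1, -1])) (Base [-1, -2, -1, -1, -1, -1])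 (Base [-2, -2, -2, -2, -1]) (Window [] 2 (-4) [-1, 2, 1, -1] (-3) (Base [-2, -2, 1, -2, -1, 1, -1]) (Base [-2, 1, -2, -1, 1, -1]) (Base [1, -2, -1, 1, -1]) (Base [-1, 2, 1, -1]) (Base [2, -1, 2, 1, -1]))) (Window [-2, -2, -2, -1] 2 2 [1, -1] (-3) (Window [] 2 (-3) [-1, -2, -2, -2, 1, -1] (-2) (Window [1] 2 (-2) [-1, -1, -2, -1, -1, 1, -1] (-1) (Base [1, -2, -1, -1, -2, -1, -1, 1, -1]) (Base [1, -1, -1, -2, -1, -1, 1, -1]) (Base [1, -1, -2, -2, 1, -1, -1, 1, -1]) (Base [1, -1, -2, 1, -2, 1, -1, -1, 1, -1]) (Base [1, -1, -2, 1, 1, -2, 1, -1, -1, 1, -1])) (Base [-1, -1, -1, -2, -1, 1, -1]) (Base [-1, -2, -2, -2, 1, -1]) (Base [-1, -2, 1, -2, -2, 1, -1]) (Base [-1, -2, 1, 1, -2, -2, 1, -1])) (Window [] 2 (-2) [-1, -1, -2, -1, 1, -1] (-1) (Base [-2, -1, -1, -2, -1, 1, -1]) (Base [-1, -1, -2, -1, 1, -1]) (Base [-1, -2, -2, 1, -1, 1, -1]) (Base [-1, -2, 1, -2, 1, -1, 1, -1]) (Base [-1, -2, 1, 1, -2, 1, -1, 1, -1])) (Base [-1, -2, -1, -1, -1, 1, -1]) (Base [-2, -2, -2, -1, 1, -1]) (Base [-2, -2, 1, -2, -1, 1, -1])) (Base [-2, 1, 1, -2, -1]) (Base [1, 1,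 -2, -1]) (Base [-1, 2, 2, 1, -1]))),
  ((2, 0, (-2)), (Base [])),
  ((2, 0, (-1)), (Base [2])),
  ((2, 0, 0), (Base [2, 2])),
  ((2, 0, 1), (Base [2, 2, 2])),
  ((2, 0, 2), (Base [2, 2, 2, 2])),
  ((2, 1, (-2)), (Base [2, -1, -1, 2, 1])),
  ((2, 1, (-1)), (Base [2, -1, 2, 1])),
  ((2, 1, 0), (Base [2, 2, 1])),
  ((2, 1, 1), (Base [1, 2, 1, 1])),
  ((2, 1, 2), (Base [-1, -1, -1, 2, 1, 1, 2, 1, 1, 1, 1])),
  ((2, 2, (-2)), (Base [2, 2, 1, 1, -2, -2])),
  ((2, 2, (-1)), (Window [] 2 2 [1, 1, -2] (-3) (Window [-2, -2, -2] 1 2 [-2] (-3) (Window [] 2 (-4) [-1, -2, -2, -2, 1] (-2) (Window [1] 2 (-2) [-1, -1, -2, -1, -1, 1] (-1) (Base [1, -2, -1, -1, -2, -1, -1, 1]) (Base [1, -1, -1, -2, -1, -1, 1]) (Base [1, -1, -2, -2, 1, -1, -1, 1]) (Base [1, -1, -2, 1, -2, 1, -1, -1, 1]) (Base [1, -1, -2, 1, 1, -2, 1, -1, -1, 1])) (Base [-1, -1, -1, -2, -1, 1]) (Base [-1, -2, -2, -2, 1]) (Base [-1, -2, 1, -2, -2, 1]) (Base [-1, -2, 1, 1, -2, -2, 1])) (Window [] 2 (-3) [-1, -1, -2] (-1) (Base [-2, -1, -1, -2]) (Base [-1, -1, -2]) (Base [-1, -2, -2, 1]) (Base [-1, -2,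 1, -2, 1]) (Base [-1, -2, 1, 1, -2, 1])) (Base [-1, -2, -1, -1, -1]) (Base [-2, -2, -2, -2]) (Window [] 2 (-4) [-1, 2, 1] (-3) (Base [-2, -2, 1, -2, -1, 1]) (Base [-2, 1, -2, -1, 1]) (Base [1, -2, -1, 1]) (Base [-1, 2, 1]) (Base [2, -1, 2, 1]))) (Window [-2, -2, -2, -1] 2 2 [1] (-3) (Window [] 2 (-3) [-1, -2, -2, -2, 1] (-2) (Window [1] 2 (-2) [-1, -1, -2, -1, -1, 1] (-1) (Base [1, -2, -1, -1, -2, -1, -1, 1]) (Base [1, -1, -1, -2, -1, -1, 1]) (Base [1, -1, -2, -2, 1, -1, -1, 1]) (Base [1, -1, -2, 1, -2, 1, -1, -1, 1]) (Base [1, -1, -2, 1, 1, -2, 1, -1, -1, 1])) (Base [-1, -1, -1, -2, -1, 1]) (Base [-1, -2, -2, -2, 1]) (Base [-1, -2, 1, -2, -2, 1]) (Base [-1, -2, 1, 1, -2, -2, 1])) (Window [] 2 (-2) [-1, -1, -2, -1, 1] (-1) (Base [-2, -1, -1, -2, -1, 1]) (Base [-1, -1, -2, -1, 1]) (Base [-1, -2, -2, 1, -1, 1]) (Base [-1, -2, 1, -2, 1, -1, 1]) (Base [-1, -2, 1, 1, -2, 1, -1, 1])) (Base [-1, -2, -1, -1, -1, 1]) (Base [-2, -2, -2, -1, 1]) (Base [-2, -2, 1, -2, -1, 1])) (Base [-2, 1, 1, -2]) (Base [1, 1, -2]) (Base [-1, 2, 2, 1]))),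
  ((2, 2, 0), (Base [2, 2, 1, 1])),
  ((2, 2, 1), (Window [] 2 3 [1, 2, 2, -1] (-2) (Base [1, 2, -1, -1, 2, -1]) (Base [1, 2, -1, 2, -1]) (Base [1, 2, 2, -1]) (Base [1, 1, 2, 1, -1]) (Base [-1, -1, -1, 2, 1, 1, 2, 1, 1, 1, 1, -1]))),
  ((2, 2, 2), (Base [2, 2, 1, 1, 2, 2]))]"

definition certs_i :: "((int \<times> int) \<times> cert) list" where
  "certs_i = [(((-2), (-2)), (Window [1] 2 4 [-1, -1, -1, -2, -2, -1, -2, -2, -2, -1] (-1) (Base [1, -1, -1, -1, -1, -2, -1, -1, -2, -2, -1, -1, -2, 1, 1, -1]) (Base [1, -1, -1, -2, -2, -2, -1, -2, -2, -1, -1]) (Base [1, -1, -2, -2, -2, -2, -1, -2, -2, -1]) (Base [1, -1, -2, -2, -2, -1, -2, -2, -2, 1, -1]) (Base [1, -1, -2, -2, -1, -1, -2, -2, 1, -1]))),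
  (((-2), (-1)), (Base [-1, -2, -2, -2, -2, -2, -1, -2, 1, 1, 1, 1])),
  (((-2), 0), (Base [-2, -2, -2, -2, -1, 2, 1])),
  (((-2), 1), (Base [-2, -2, -2, -1, -1, 2, 2, 1])),
  (((-2), 2), (Base [-2, -2, 1, 1, -2, 1, -2])),
  (((-1), (-2)), (Base [1, 1, 1, -2, -2, -2, -1, -2, -2, -1])),
  (((-1), (-1)), (Base [-1, -2, -2, -2, -2, -2, 2, 2, 2])),
  (((-1), 0), (Base [-2, -2, -2, -1, 2, 1])),
  (((-1), 1), (Base [-2, -2, -1, -1, 2, 2, 1])),
  (((-1), 2), (Base [1, 2, 2, 2, -1, -1, -2, -2])),
  ((0, (-2)), (Base [-1, -1, -2, -2, -1, 2, 1])),
  ((0, (-1)), (Base [-1, -2, -2, -1, 2, 1])),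
  ((0, 0), (Base [-2, -2, -1, 2, 1])),
  ((0, 1), (Base [1, -2, -2, -1, 2, 1])),
  ((0, 2), (Base [1, 1, -2, -2, -1, 2, 1])),
  ((1, (-2)), (Base [-1, -2, -2, -2, -1, 2, 2, 1])),
  ((1, (-1)), (Base [-1, -2, -2, -1, 2, 2, 1])),
  ((1, 0), (Base [1, -2, -2, -2, -2, -2, 2, 2, 2, 2])),
  ((1, 1), (Base [-1, -1, -2, -2, -2, 2, 2, 2, 2, 2, 1])),
  ((1, 2), (Base [-1, -1, -2, -2, 1, 1, 1, 2, 1, 1])),
  ((2, (-2)), (Base [-1, -2, -2, -1, -1, 2, 2, 2, 1])),
  ((2, (-1)), (Base [-1, -2, -2, -1, 2, 2, 2, 1])),
  ((2, 0), (Base [-1, -2, -2, -2, -2, 2, 2, 2, 2, 2, 1])),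
  ((2, 1), (Base [-1, -2, -2, -2, 1, 1, 1, 2, 1, 1])),
  ((2, 2), (Base [-1, -2, -2, 1, 1, 2, 2, 2, 1]))]"

definition certs_ii :: "((int \<times> int) \<times> cert) list" where
  "certs_ii = [(((-2), (-2)), (Base [1, 2, 2, -1, -1, -2, -2, -2, -1])),
  (((-2), (-1)), (Base [-2, 1, 1, -2, -2, -1])),
  (((-2), 0), (Base [1, 1, -2, -2, -2, -2, -2, -1, -2, 1, 1, 1, 1])),
  (((-2), 1), (Base [-2, -2, -2, -2, 1, 1, 2, 1])),
  (((-2), 2), (Base [1, 2, 2, 1, 1, -2, -2, -2, -1])),
  (((-1), (-2)), (Base [1, -2, -2, -1, -1, 2])),
  (((-1), (-1)), (Base [1, 1, -2, -2, -2, -2, -2, 2, 2, 2, -1])),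
  (((-1), 0), (Base [-1, -2, -2, -2, -2, 2, 2, 2, 2, 2])),
  (((-1), 1), (Base [-2, -2, -2, 1, 1, 2, 1])),
  (((-1), 2), (Base [1, 1, 2, 1, 1, 1, -2, -2, -2, -1])),
  ((0, (-2)), (Base [-1, -1, -1, -2, -2, 1, 1, 2, 1])),
  ((0, (-1)), (Base [-1, -1, -2, -2, 1, 1, 2, 1])),
  ((0, 0), (Base [-1, -2, -2, 1, 1, 2, 1])),
  ((0, 1), (Base [-2, -2, 1, 1, 2, 1])),
  ((0, 2), (Base [1, -2, -2, 1, 1, 2, 1])),
  ((1, (-2)), (Base [-1, -2, -2, -2, 1, 1, 2, 2])),
  ((1, (-1)), (Base [-1, -2, -2, 1, 1, 2, 2])),
  ((1, 0), (Base [-1, -2, 1, 1, 2, 2])),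
  ((1, 1), (Base [1, -2, -2, -2, 2, 2, 2, 2, 2])),
  ((1, 2), (Base [-1, 2, 1, 1, 2, 2])),
  ((2, (-2)), (Base [2, 2, -1, -1, 2, -1, 2])),
  ((2, (-1)), (Base [2, 2, 2, 1, 1, -2, -2, -1])),
  ((2, 0), (Base [-1, -2, 1, 1, 1, 2, 2])),
  ((2, 1), (Base [1, 1, -2, -2, -2, -2, 2, 2, 2, 2, 2, 1])),
  ((2, 2), (Window [-1] 2 (-1) [1, 2, 2, 1, 1, 2, 2] 0 (Base [-1, 1, 2, 2, 1, 1, 2, 2]) (Base [-1, 1, 1, 2, 1, 1, 1, 2, 2]) (Base [-1, 1, 1, 1, 2, 1, 1, 2, 2, 2]) (Base [-1, 1, 1, 1, 1, 2, 1, 1, 2, 2, 1]) (Base [-1, -1, 2, 1, 1, 2, 2, 1, 1, 2, 1, 1, 1, 1])))]"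


lemma Uprime_certs_cover:
  "\<forall>b\<in>set [-2..2]. \<forall>c\<in>set [-2..2]. \<forall>d\<in>set [-2..2]. case map_of Uprime_certs (b, c, d) of
     None \<Rightarrow> False | Some cc \<Rightarrow> certifies Uprime_basic (gen_pow 2 b @ gen_pow 1 c @ gen_pow 2 d) cc"
  by code_simp

lemma certs_i_cover:
  "\<forall>k\<in>set [-2..2]. \<forall>j\<in>set [-2..2]. case map_of certs_i (k, j) of None \<Rightarrow> False
     | Some cc \<Rightarrow> certifies (prop44_basic [-2,-1,-1,-2,-2,-1,-1,-2] [-2,-2,1,1,-2,1,-2])
                   (gen_pow 2 k @ gen_pow 1 j @ [-2,1,-2]) cc"
  by code_simp

lemma certs_ii_cover:
  "\<forall>k\<in>set [-2..2]. \<forall>j\<in>set [-2..2]. case map_of certs_ii (k, j) of None \<Rightarrow> False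
     | Some cc \<Rightarrow> certifies (prop44_basic [2,1,1,2,2,1,1,2] [2,2,-1,-1,2,-1,2])
                   (gen_pow 2 k @ gen_pow 1 j @ [2,-1,2]) cc"
  by code_simp


lemma ex_if_case_option_False: "(case x of None \<Rightarrow> False | Some y \<Rightarrow> P y) \<Longrightarrow> \<exists>y. P y"
  by (auto split: option.splits)

lemma Uprime_certs_exist:
  "b \<in> {-2..2} \<Longrightarrow> c \<in> {-2..2} \<Longrightarrow> d \<in> {-2..2} \<Longrightarrow>
     \<exists>cc. certifies Uprime_basic (gen_pow 2 b @ gen_pow 1 c @ gen_pow 2 d) cc"
  using Uprime_certs_cover unfolding set_upto by (blast dest: ex_if_case_option_False)

lemma certs_i_exist:
  "k \<in> {-2..2} \<Longrightarrow> j \<in> {-2..2} \<Longrightarrow>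
     \<exists>cc. certifies (prop44_basic [-2,-1,-1,-2,-2,-1,-1,-2] [-2,-2,1,1,-2,1,-2])
       (gen_pow 2 k @ gen_pow 1 j @ [-2,1,-2]) cc"
  using certs_i_cover unfolding set_upto by (blast dest: ex_if_case_option_False)

lemma certs_ii_exist:
  "k \<in> {-2..2} \<Longrightarrow> j \<in> {-2..2} \<Longrightarrow>
     \<exists>cc. certifies (prop44_basic [2,1,1,2,2,1,1,2] [2,2,-1,-1,2,-1,2])
       (gen_pow 2 k @ gen_pow 1 j @ [2,-1,2]) cc"
  using certs_ii_cover unfolding set_upto by (blast dest: ex_if_case_option_False)

locale braid_pair =
  fixes s1 s2 t1 t2 :: "'a::monoid_mult"
  assumes s1_t1: "s1 * t1 = 1" and t1_s1: "t1 * s1 = 1"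
    and s2_t2: "s2 * t2 = 1" and t2_s2: "t2 * s2 = 1"
    and braid: "s1 * s2 * s1 = s2 * s1 * s2"
begin

definition letter :: "int \<Rightarrow> 'a" where
  "letter x = (if x = 1 then s1 else if x = -1 then t1 else if x = 2 then s2 else if x = -2 then t2 else 1)"

definition word :: "int list \<Rightarrow> 'a" where
  "word w = prod_list (map letter w)"

lemma word_simps [simp]:
  "word [] = 1" "word (x # w) = letter x * word w" "word (u @ v) = word u * word v"
  by (simp_all add: word_def)

definition Delta :: 'a where "Delta = s1 * s2 * s1"
definition Delta_inv :: 'a where "Delta_inv = t1 * t2 * t1"

lemma Delta_s1: "Delta * s1 = s2 * Delta" and Delta_s2: "Delta * s2 = s1 * Delta"
  unfolding Delta_def by (metis braid mult.assoc)+

lemma Delta_t1: "Delta * t1 = t2 * Delta"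
proof -
  have "t2 * Delta = t2 * (Delta * s1) * t1" by (simp add: mult.assoc s1_t1)
  then show ?thesis by (simp add: Delta_s1 mult.assoc[symmetric] t2_s2)
qed

lemma Delta_t2: "Delta * t2 = t1 * Delta"
proof -
  have "t1 * Delta = t1 * (Delta * s2) * t2" by (simp add: mult.assoc s2_t2)
  then show ?thesis by (simp add: Delta_s2 mult.assoc[symmetric] t1_s1)
qed

lemma Delta_word: "Delta * word w = word (map swap12 w) * Delta"
proof (induction w)
  case (Cons x w)
  have "Delta * letter x = letter (swap12 x) * Delta"
    by (auto simp: letter_def swap12_def Delta_s1 Delta_s2 Delta_t1 Delta_t2)
  with Cons show ?case by (simp flip: mult.assoc) (simp add: mult.assoc)
qed simp

lemma word_Delta: "word w * Delta = Delta * word (map swap12 w)"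
  using Delta_word[of "map swap12 w"] by (simp add: comp_def)

lemma Delta_inv_Delta: "Delta_inv * Delta = 1"
  unfolding Delta_def Delta_inv_def by (simp add: mult.assoc) (simp flip: mult.assoc add: t1_s1 t2_s2)

lemma Delta_mult_t1: "Delta * t1 = s1 * s2" and Delta_mult_t2: "Delta * t2 = s2 * s1"
  unfolding Delta_def by (simp_all add: mult.assoc s1_t1) (metis braid mult.assoc mult_1_right s2_t2)

definition Delta_zpow :: "int \<Rightarrow> 'a" where
  "Delta_zpow k = (if 0 \<le> k then Delta ^ nat k else Delta_inv ^ nat (-k))"

lemma Delta_zpow_succ: "Delta_zpow (k + 1) = Delta_zpow k * Delta"
proof (cases "0 \<le> k")
  case True
  then have "nat (k + 1) = Suc (nat k)" by simp
  with True show ?thesis by (simp add: Delta_zpow_def power_commutes)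
next
  case False
  then have "nat (-k) = Suc (nat (- (k + 1)))" by simp
  with False show ?thesis
    by (simp add: Delta_zpow_def power_Suc2 mult.assoc Delta_inv_Delta del: power_Suc)
qed

definition nf_val :: "int \<times> int list \<Rightarrow> 'a" where
  "nf_val st = Delta_zpow (fst st) * word (rev (snd st))"

lemma nf_val_push: "nf_val (nf_push st x) = nf_val st * letter x"
proof -
  obtain k R where st: "st = (k, R)" by fastforce
  show ?thesis
  proof (cases "\<exists>y R'. R = y # x # R' \<and> x \<noteq> y \<and> x \<in> {1,2} \<and> y \<in> {1,2}")
    case True
    then obtain y R' where R: "R = y # x # R'" and xy: "x \<noteq> y" "x \<in> {1,2}" "y \<in> {1,2}" by blast
    have "letter x * letter y * letter x = Delta"
      using xy by (auto simp: letter_def Delta_def braid)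
    then have "nf_val st * letter x = Delta_zpow k * (word (rev R') * Delta)"
      using R st by (simp add: nf_val_def mult.assoc)
    also have "\<dots> = nf_val (nf_push st x)"
      using R st xy by (simp add: nf_push_def nf_val_def word_Delta Delta_zpow_succ mult.assoc rev_map)
    finally show ?thesis ..
  next
    case False
    then have "nf_push st x = (k, x # R)" using st by (auto simp: nf_push_def split: list.split)
    then show ?thesis using st by (simp add: nf_val_def mult.assoc)
  qed
qed

lemma nf_val_step: "nf_val (nf_step st x) = nf_val st * letter x"
proof -
  obtain k R where st: "st = (k, R)" by fastforce
  have "nf_val st = nf_val (k - 1, map swap12 R) * Delta"
    using st Delta_zpow_succ[of "k - 1"] by (simp add: nf_val_def mult.assoc word_Delta rev_map comp_def)
  then show ?thesis
    using st Delta_mult_t1 Delta_mult_t2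
    by (auto simp: nf_step_def nf_val_push letter_def mult.assoc)
qed

lemma nf_val_braid_nf: "nf_val (braid_nf w) = word w"
proof (induction w rule: rev_induct)
  case Nil
  then show ?case by (simp add: braid_nf_def nf_val_def Delta_zpow_def)
next
  case (snoc x w)
  then show ?case by (simp add: braid_nf_def nf_val_step)
qed

lemma word_eq_if_braid_nf_eq: "braid_nf u = braid_nf v \<Longrightarrow> word u = word v"
  by (metis nf_val_braid_nf)

lemma word_gen_pow_succ:
  assumes "g = 1 \<or> g = 2"
  shows "word (gen_pow g (n + 1)) = word (gen_pow g n) * letter g"
proof -
  have inv: "letter (-g) * letter g = 1" using assms by (auto simp: letter_def t1_s1 t2_s2)
  have rep: "word (replicate k x) = letter x ^ k" for k x by (induction k) simp_all
  show ?thesis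
  proof (cases "0 \<le> n")
    case True
    then have "nat (n + 1) = Suc (nat n)" by simp
    with True show ?thesis by (simp add: gen_pow_def rep power_commutes)
  next
    case False
    define m where "m = nat (- (n + 1))"
    have "gen_pow g n = replicate (Suc m) (-g)" "gen_pow g (n + 1) = replicate m (-g)"
      using False by (simp_all add: gen_pow_def m_def Suc_nat_eq_nat_zadd1)
    then show ?thesis by (simp only: rep power_Suc2 mult.assoc inv mult_1_right)
  qed
qed

lemma word_gen_pow_add:
  "g = 1 \<or> g = 2 \<Longrightarrow> word (gen_pow g (n + int k)) = word (gen_pow g n) * letter g ^ k"
proof (induction k)
  case (Suc k)
  have "n + int (Suc k) = (n + int k) + 1" by simp
  then have "word (gen_pow g (n + int (Suc k))) = word (gen_pow g (n + int k)) * letter g"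
    by (simp only: word_gen_pow_succ[OF Suc.prems])
  with Suc show ?case by (simp add: mult.assoc power_commutes)
qed simp

lemma word_gen_pow_nat: "word (gen_pow g (int n)) = letter g ^ n"
  by (simp add: gen_pow_def) (induction n; simp)

end

section \<open>Linear recurrences and products of submodules\<close>

lemma int_window5_induct:
  fixes P :: "int \<Rightarrow> bool"
  assumes step: "\<And>n. P n \<Longrightarrow> P (n + 1) \<Longrightarrow> P (n + 2) \<Longrightarrow> P (n + 3) \<Longrightarrow> P (n + 4) \<Longrightarrow> P (n + 5)"
    and window: "\<And>j. m \<le> j \<Longrightarrow> j \<le> m + 4 \<Longrightarrow> P j"
    and "m \<le> n"
  shows "P n"
proof -
  have "P (m + int i)" for i
  proof (induction i rule: less_induct)
    case (less i)
    show ?case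
    proof (cases "i < 5")
      case True
      then show ?thesis using window by simp
    next
      case False
      then obtain k where "i = k + 5" by (metis add.commute le_Suc_ex not_less)
      with less.IH[of k] less.IH[of "k + 1"] less.IH[of "k + 2"] less.IH[of "k + 3"] less.IH[of "k + 4"]
      show ?thesis using step[of "m + int k"] by (simp add: ac_simps)
    qed
  qed
  from this[of "nat (n - m)"] \<open>m \<le> n\<close> show ?thesis by simp
qed

context module
begin

lemma recurrence5_in_subspace:
  fixes F :: "int \<Rightarrow> 'b"
  assumes V: "subspace V" and unit: "e * e' = 1"
    and rec: "\<And>n. F (n + 5) = a *s F (n + 4) + b *s F (n + 3) + c *s F (n + 2) + d *s F (n + 1) + e *s F n"
    and window: "\<And>j. m \<le> j \<Longrightarrow> j \<le> m + 4 \<Longrightarrow> F j \<in> V"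
  shows "F n \<in> V"
proof (cases "m \<le> n")
  case True
  show ?thesis
    by (rule int_window5_induct[where P = "\<lambda>j. F j \<in> V", OF _ window True])
      (simp add: rec V subspace_add subspace_scale)
next
  case False
  \<comment> \<open>\<open>e\<close> is a unit, so the recurrence also runs backwards\<close>
  have backward: "F n = e' *s (F (n + 5) - a *s F (n + 4) - b *s F (n + 3) - c *s F (n + 2) - d *s F (n + 1))"
    for n using rec[of n] unit by (simp add: algebra_simps)
  have "F (- (- n)) \<in> V"
  proof (rule int_window5_induct[where P = "\<lambda>j. F (- j) \<in> V" and m = "- (m + 4)"])
    fix k :: int
    assume IH: "F (- k) \<in> V" "F (- (k + 1)) \<in> V" "F (- (k + 2)) \<in> V" "F (- (k + 3)) \<in> V"
      "F (- (k + 4)) \<in> V"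
    have "- (k + 5) + 5 = - k" "- (k + 5) + 4 = - (k + 1)" "- (k + 5) + 3 = - (k + 2)"
      "- (k + 5) + 2 = - (k + 3)" "- (k + 5) + 1 = - (k + 4)" by simp_all
    then have "F (- (k + 5)) = e' *s (F (- k) - a *s F (- (k + 1)) - b *s F (- (k + 2))
        - c *s F (- (k + 3)) - d *s F (- (k + 4)))"
      using backward[of "- (k + 5)"] by (simp only:)
    then show "F (- (k + 5)) \<in> V" by (simp only:) (intro subspace_scale subspace_diff V IH)
  qed (use window False in auto)
  then show ?thesis by simp
qed

end

lemma msum_memI1: "x \<in> X \<Longrightarrow> 0 \<in> Y \<Longrightarrow> x \<in> msum X Y"
  unfolding msum_def by force

lemma msum_memI2: "y \<in> Y \<Longrightarrow> 0 \<in> X \<Longrightarrow> y \<in> msum X Y"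
  unfolding msum_def by force

lemma zero_in_foldr_msum: "\<forall>Y\<in>set L. 0 \<in> Y \<Longrightarrow> 0 \<in> foldr msum L {0}"
  by (induction L) (simp_all add: msum_memI1)

lemma summand_subset_foldr_msum:
  "X \<in> set L \<Longrightarrow> \<forall>Y\<in>set L. 0 \<in> Y \<Longrightarrow> X \<subseteq> foldr msum L {0}"
proof (induction L)
  case (Cons Y L)
  then show ?case
    using zero_in_foldr_msum[of L] by (auto intro: msum_memI1 msum_memI2)
qed simp

locale scalar_algebra = module scale
  for scale :: "'r::comm_ring_1 \<Rightarrow> 'a::ring_1 \<Rightarrow> 'a" (infixr \<open>*s\<close> 75) +
  assumes scale_mult_left: "c *s (x * y) = (c *s x) * y"
    and scale_mult_right: "c *s (x * y) = x * (c *s y)"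
begin

lemma mult_span_in_subspace:
  assumes "x \<in> span A" and V: "subspace V" and A: "\<And>y. y \<in> A \<Longrightarrow> p * y * q \<in> V"
  shows "p * x * q \<in> V"
  using \<open>x \<in> span A\<close>
proof (induction rule: span_induct_alt)
  case base
  then show ?case using subspace_0[OF V] by simp
next
  case (step c y z)
  have "p * (c *s y + z) * q = c *s (p * y * q) + p * z * q"
    by (simp add: distrib_left distrib_right flip: scale_mult_left scale_mult_right)
  with step A V show ?case by (simp add: subspace_add subspace_scale)
qed

lemma mult_scale_mult: "p * (c *s x) * q = c *s (p * x * q)"
  by (simp flip: scale_mult_left scale_mult_right)

lemma subspace_mprod: "subspace (mprod scale X Y)"
  by (simp add: mprod_def)

lemma mprod_memI: "x \<in> X \<Longrightarrow> y \<in> Y \<Longrightarrow> x * y \<in> mprod scale X Y"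
  unfolding mprod_def by (rule span_base) blast

lemma mprod_subset_span:
  assumes "X \<subseteq> span A" "Y \<subseteq> span B"
  shows "mprod scale X Y \<subseteq> span {x * y | x y. x \<in> A \<and> y \<in> B}"
  unfolding mprod_def
proof (rule span_minimal, safe)
  fix x y assume "x \<in> X" "y \<in> Y"
  have "1 * x * y \<in> span {x * y | x y. x \<in> A \<and> y \<in> B}"
  proof (rule mult_span_in_subspace)
    show "x \<in> span A" using \<open>x \<in> X\<close> assms(1) by blast
    fix x' assume "x' \<in> A"
    have "y \<in> span B" using \<open>y \<in> Y\<close> assms(2) by blast
    then have "x' * y * 1 \<in> span {x * y | x y. x \<in> A \<and> y \<in> B}"
      by (rule mult_span_in_subspace) (use \<open>x' \<in> A\<close> in \<open>auto intro!: span_base\<close>)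
    then show "1 * x' * y \<in> span {x * y | x y. x \<in> A \<and> y \<in> B}" by simp
  qed simp
  then show "x * y \<in> span {x * y | x y. x \<in> A \<and> y \<in> B}" by simp
qed

lemma sand_memI: "p \<in> X \<Longrightarrow> q \<in> Y \<Longrightarrow> p * x * q \<in> sand scale X x Y"
  unfolding sand_def by (intro mprod_memI) auto

lemma subspace_msum:
  assumes X: "subspace X" and Y: "subspace Y"
  shows "subspace (msum X Y)"
  unfolding subspace_def
proof (intro conjI ballI allI)
  show "0 \<in> msum X Y" using msum_memI1[OF subspace_0[OF X] subspace_0[OF Y]] .
next
  fix u v assume "u \<in> msum X Y" "v \<in> msum X Y"
  then obtain x y x' y' where "u = x + y" "v = x' + y'" "x \<in> X" "y \<in> Y" "x' \<in> X" "y' \<in> Y"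
    unfolding msum_def by blast
  moreover have "x + y + (x' + y') = (x + x') + (y + y')" by (simp add: ac_simps)
  ultimately show "u + v \<in> msum X Y"
    unfolding msum_def using X Y by (blast intro: subspace_add)
next
  fix c u assume "u \<in> msum X Y"
  then show "c *s u \<in> msum X Y"
    unfolding msum_def using X Y by (force simp: scale_right_distrib intro: subspace_scale)
qed

lemma msum_subset: "subspace V \<Longrightarrow> X \<subseteq> V \<Longrightarrow> Y \<subseteq> V \<Longrightarrow> msum X Y \<subseteq> V"
  unfolding msum_def by (blast intro: subspace_add)

lemma subspace_foldr_msum: "\<forall>X\<in>set L. subspace X \<Longrightarrow> subspace (foldr msum L {0})"
  by (induction L) (auto intro: subspace_msum)

lemma ugen_eq_span: "ugen scale s = span (range (\<lambda>n. s ^ n))"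
  by (simp add: ugen_def)

lemma power_in_ugen: "s ^ n \<in> ugen scale s"
  by (simp add: ugen_eq_span span_base)

lemma one_in_ugen: "1 \<in> ugen scale s"
  using power_in_ugen[of s 0] by simp

lemma ugen_mult_closed:
  assumes "x \<in> ugen scale s" "y \<in> ugen scale s"
  shows "x * y \<in> ugen scale s"
proof -
  have "mprod scale (ugen scale s) (ugen scale s) \<subseteq> span {x * y | x y. x \<in> range (\<lambda>n. s ^ n) \<and> y \<in> range (\<lambda>n. s ^ n)}"
    by (rule mprod_subset_span) (simp_all add: ugen_eq_span)
  also have "\<dots> \<subseteq> ugen scale s"
    by (rule span_minimal) (auto simp: ugen_eq_span span_base simp flip: power_add)
  finally show ?thesis using assms by (blast intro: mprod_memI)
qed

lemma inverse_in_ugen: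
  assumes quintic: "s ^ 5 = a *s s ^ 4 + b *s s ^ 3 + c *s s ^ 2 + d *s s + e *s 1"
    and unit: "e * e' = 1" and "s * t = 1"
  shows "t \<in> ugen scale s"
proof -
  have shift: "s ^ Suc k * t = s ^ k" for k
    by (simp only: power_Suc2 mult.assoc \<open>s * t = 1\<close> mult_1_right)
  have "s ^ 5 * t = s ^ 4" "s ^ 4 * t = s ^ 3" "s ^ 3 * t = s ^ 2" "s ^ 2 * t = s ^ 1"
    using shift[of 4] shift[of 3] shift[of 2] shift[of 1] by (simp_all add: power2_eq_square)
  then have "s ^ 4 = a *s s ^ 3 + b *s s ^ 2 + c *s s ^ 1 + d *s s ^ 0 + e *s t"
    using arg_cong[OF quintic, of "\<lambda>x. x * t"] \<open>s * t = 1\<close>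
    by (simp only: distrib_right power_0 power_one_right mult_1_left flip: scale_mult_left)
  then have "t = e' *s (s ^ 4 - a *s s ^ 3 - b *s s ^ 2 - c *s s ^ 1 - d *s s ^ 0)"
    using unit by (simp add: algebra_simps)
  then show ?thesis
    unfolding ugen_eq_span by (simp only:) (intro span_scale span_diff span_base rangeI)
qed

lemma mprod_u12121_subset:
  assumes "subspace V" and "\<And>i1 i2 i3 i4 i5. x ^ i1 * y ^ i2 * x ^ i3 * y ^ i4 * x ^ i5 \<in> V"
  shows "mprod scale (mprod scale (mprod scale (mprod scale (ugen scale x) (ugen scale y))
           (ugen scale x)) (ugen scale y)) (ugen scale x) \<subseteq> V"
proof -
  let ?P = "\<lambda>z. range (\<lambda>n. z ^ n)"
  let ?prod = "\<lambda>A B. {a * b | a b. a \<in> A \<and> b \<in> B}"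
  have "mprod scale (mprod scale (mprod scale (mprod scale (ugen scale x) (ugen scale y))
           (ugen scale x)) (ugen scale y)) (ugen scale x)
        \<subseteq> span (?prod (?prod (?prod (?prod (?P x) (?P y)) (?P x)) (?P y)) (?P x))"
    unfolding ugen_eq_span by (intro mprod_subset_span order.refl)
  also have "\<dots> \<subseteq> V" using assms by (intro span_minimal) auto
  finally show ?thesis .
qed

end

lemma is_algebra_scalar_algebra: "is_algebra sc \<Longrightarrow> scalar_algebra sc"
  unfolding is_algebra_def scalar_algebra_def scalar_algebra_axioms_def by blast

section \<open>The algebra \<open>H\<^sub>5\<close>\<close>

locale H5_algebra =
  fixes sc :: "'r::comm_ring_1 \<Rightarrow> 'a::ring_1 \<Rightarrow> 'a" and a b c d e :: 'r and s1 s2 t1 t2 :: 'a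
  assumes H5: "H5_setting sc a b c d e s1 s2 t1 t2"
begin

sublocale braid_pair s1 s2 t1 t2
  using H5 by unfold_locales (simp_all add: H5_setting_def)

sublocale scalar_algebra sc
  using H5 by (simp add: H5_setting_def is_algebra_scalar_algebra)

abbreviation U1 :: "'a set" where "U1 \<equiv> ugen sc s1"
abbreviation U2 :: "'a set" where "U2 \<equiv> ugen sc s2"
abbreviation U12121 :: "'a set" where "U12121 \<equiv> mprod sc (mprod sc (mprod sc (mprod sc U1 U2) U1) U2) U1"

lemma quintic: "s \<in> {s1, s2} \<Longrightarrow> s ^ 5 = sc a (s ^ 4) + sc b (s ^ 3) + sc c (s ^ 2) + sc d s + sc e 1"
  using H5 unfolding H5_setting_def by blast

lemma e_unit: obtains e' where "e * e' = 1"
  using H5 by (auto simp: H5_setting_def)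

lemma word_exponent_window:
  assumes g: "g = 1 \<or> g = 2" and V: "subspace V"
    and window: "\<And>j. m \<le> j \<Longrightarrow> j \<le> m + 4 \<Longrightarrow> word (u @ gen_pow g j @ v) \<in> V"
  shows "word (u @ gen_pow g n @ v) \<in> V"
proof -
  define F where "F j = word (u @ gen_pow g j @ v)" for j
  have "letter g \<in> {s1, s2}" using g by (auto simp: letter_def)
  note q = quintic[OF this]
  obtain e' where unit: "e * e' = 1" by (rule e_unit)
  have rec: "F (n + 5) = sc a (F (n + 4)) + sc b (F (n + 3)) + sc c (F (n + 2)) + sc d (F (n + 1)) + sc e (F n)"
    for n
  proof -
    let ?W = "word u * word (gen_pow g n)"
    have pow: "F (n + int k) = ?W * letter g ^ k * word v" for k
      using word_gen_pow_add[OF g] by (simp add: F_def mult.assoc)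
    have "F (n + 5) = ?W * letter g ^ 5 * word v" using pow[of 5] by simp
    also have "\<dots> = sc a (?W * letter g ^ 4 * word v) + sc b (?W * letter g ^ 3 * word v)
        + sc c (?W * letter g ^ 2 * word v) + sc d (?W * letter g ^ 1 * word v) + sc e (?W * letter g ^ 0 * word v)"
      by (simp only: q distrib_left distrib_right mult_scale_mult power_0 power_one_right mult_1_right)
    also have "\<dots> = sc a (F (n + 4)) + sc b (F (n + 3)) + sc c (F (n + 2)) + sc d (F (n + 1)) + sc e (F n)"
      using pow[of 4] pow[of 3] pow[of 2] pow[of 1] pow[of 0] by simp
    finally show ?thesis .
  qed
  have "F j \<in> V" if "m \<le> j" "j \<le> m + 4" for j
    using window[OF that] by (simp only: F_def)
  with recurrence5_in_subspace[OF V unit rec] have "F n \<in> V" .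
  then show ?thesis by (simp only: F_def)
qed

lemma certified_word_in_subspace:
  assumes "certifies basic w cc" and V: "subspace V"
    and basic: "\<And>w'. basic w' \<Longrightarrow> word (p @ w' @ q) \<in> V"
  shows "word (p @ w @ q) \<in> V"
  using assms(1)
proof (induction cc arbitrary: w)
  case (Base w')
  then show ?case using basic[of w'] word_eq_if_braid_nf_eq[of w w'] by simp
next
  case (Window u g n v m c0 c1 c2 c3 c4)
  then have "word w = word (u @ gen_pow g n @ v)" by (intro word_eq_if_braid_nf_eq) simp
  moreover have "word ((p @ u) @ gen_pow g n @ (v @ q)) \<in> V"
  proof (rule word_exponent_window[OF _ V])
    fix j assume "m \<le> j" "j \<le> m + 4"
    then consider "j = m" | "j = m + 1" | "j = m + 2" | "j = m + 3" | "j = m + 4" by linarith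
    then show "word ((p @ u) @ gen_pow g j @ (v @ q)) \<in> V"
      using Window.IH[of "u @ gen_pow g j @ v"] Window.prems by cases simp_all
  qed (use Window in simp)
  ultimately show ?case by (simp add: mult.assoc)
qed

lemma word_letters1_in_U1: "list_all is_letter1 w \<Longrightarrow> word w \<in> U1"
proof (induction w)
  case (Cons x w)
  obtain e' where "e * e' = 1" by (rule e_unit)
  from inverse_in_ugen[OF quintic this s1_t1] have "t1 \<in> U1" by simp
  then have "letter x \<in> U1" using Cons.prems power_in_ugen[of s1 1] by (auto simp: is_letter1_def letter_def)
  with Cons show ?case by (simp add: ugen_mult_closed)
qed (simp add: one_in_ugen)

lemma word_letters2_in_U2: "list_all is_letter2 w \<Longrightarrow> word w \<in> U2"
proof (induction w)
  case (Cons x w)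
  obtain e' where "e * e' = 1" by (rule e_unit)
  from inverse_in_ugen[OF quintic this s2_t2] have "t2 \<in> U2" by simp
  then have "letter x \<in> U2" using Cons.prems power_in_ugen[of s2 1] by (auto simp: is_letter2_def letter_def)
  with Cons show ?case by (simp add: ugen_mult_closed)
qed (simp add: one_in_ugen)

lemma omega_commutes_letters1:
  assumes z: "z \<in> {[2,1,1,2], [-2,-1,-1,-2]}" and "list_all is_letter1 w"
  shows "word z * word w = word w * word z"
  using \<open>list_all is_letter1 w\<close>
proof (induction w)
  case (Cons x w)
  have "word (z @ [x]) = word (x # z)"
    using z Cons.prems by (intro word_eq_if_braid_nf_eq braid_nf_omega_commute) simp_all
  with Cons show ?case by (simp flip: mult.assoc) (simp add: mult.assoc)
qed simp

lemma u1u2_word_2_in_U12121: "u1u2_word 2 w \<Longrightarrow> word w \<in> U12121"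
  by (elim u1u2_word_2_split) (simp add: mult.assoc[symmetric] mprod_memI word_letters1_in_U1 word_letters2_in_U2)

definition Uprime_summands :: "'a set list" where
  "Uprime_summands = mprod sc (mprod sc U1 U2) U1 # mprod sc U1 {word [2,1,1,2]}
     # mprod sc U1 {word [-2,-1,-1,-2]} # map (\<lambda>g. sand sc U1 (word g) U1) Uprime_cores"

lemma Uprime_eq_foldr: "Uprime sc s1 s2 t1 t2 = foldr msum Uprime_summands {0}"
  by (simp add: Uprime_def Uprime_summands_def Uprime_cores_def Let_def letter_def power2_eq_square mult.assoc)

lemma subspace_Uprime_summands: "\<forall>X\<in>set Uprime_summands. subspace X"
  by (auto simp: Uprime_summands_def sand_def subspace_mprod)

lemma subspace_Uprime: "subspace (Uprime sc s1 s2 t1 t2)"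
  by (simp add: Uprime_eq_foldr subspace_foldr_msum subspace_Uprime_summands)

lemma Uprime_summand_subset: "X \<in> set Uprime_summands \<Longrightarrow> X \<subseteq> Uprime sc s1 s2 t1 t2"
  using subspace_Uprime_summands
  by (simp add: Uprime_eq_foldr summand_subset_foldr_msum subspace_0)

lemma Uprime_basic_word_in_Uprime:
  assumes "Uprime_basic w" "list_all is_letter1 p" "list_all is_letter1 q"
  shows "word (p @ w @ q) \<in> Uprime sc s1 s2 t1 t2"
proof -
  obtain p' q' where w: "w = p' @ strip1 w @ q'" "list_all is_letter1 p'" "list_all is_letter1 q'"
    by (rule strip1_split)
  define P Q where "P = word (p @ p')" and "Q = word (q' @ q)"
  have PQ: "P \<in> U1" "Q \<in> U1"
    unfolding P_def Q_def using assms w by (auto intro!: word_letters1_in_U1 simp del: word_simps)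
  have pwq: "word (p @ w @ q) = P * word (strip1 w) * Q"
    by (subst w(1)) (simp add: P_def Q_def mult.assoc)
  consider "strip1 w \<in> {[2,1,1,2], [-2,-1,-1,-2]}" | "strip1 w \<in> set Uprime_cores"
    | "list_all is_letter2 (strip1 w)"
    using assms(1) Uprime_basic_def by blast
  then show ?thesis
  proof cases
    case 1
    have "P * word (strip1 w) * Q = P * Q * word (strip1 w)"
      using omega_commutes_letters1[OF 1, of "q' @ q"] assms w by (simp add: Q_def mult.assoc)
    moreover have "mprod sc U1 {word (strip1 w)} \<in> set Uprime_summands"
      using 1 by (auto simp: Uprime_summands_def)
    moreover have "P * Q * word (strip1 w) \<in> mprod sc U1 {word (strip1 w)}"
      using PQ by (intro mprod_memI ugen_mult_closed) auto
    ultimately show ?thesis using pwq Uprime_summand_subset by auto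
  next
    case 2
    then have "sand sc U1 (word (strip1 w)) U1 \<in> set Uprime_summands"
      by (simp add: Uprime_summands_def)
    then show ?thesis using sand_memI[OF PQ] pwq Uprime_summand_subset by auto
  next
    case 3
    then have "P * word (strip1 w) * Q \<in> mprod sc (mprod sc U1 U2) U1"
      using PQ by (intro mprod_memI word_letters2_in_U2)
    then show ?thesis using pwq Uprime_summand_subset by (auto simp: Uprime_summands_def)
  qed
qed

lemma u12121_word_in_Uprime:
  "word (gen_pow 1 i @ gen_pow 2 j @ gen_pow 1 k @ gen_pow 2 l @ gen_pow 1 m) \<in> Uprime sc s1 s2 t1 t2"
proof -
  have ones: "list_all is_letter1 (gen_pow 1 n)" for n
    by (simp add: gen_pow_def is_letter1_def list_all_iff)
  have window: "word (gen_pow 1 i @ (gen_pow 2 j @ gen_pow 1 k @ gen_pow 2 l) @ gen_pow 1 m)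
      \<in> Uprime sc s1 s2 t1 t2" if jkl: "j \<in> {-2..2}" "k \<in> {-2..2}" "l \<in> {-2..2}" for j k l
  proof -
    obtain cc where "certifies Uprime_basic (gen_pow 2 j @ gen_pow 1 k @ gen_pow 2 l) cc"
      using Uprime_certs_exist[OF jkl] by blast
    then show ?thesis
      by (rule certified_word_in_subspace[OF _ subspace_Uprime])
        (erule Uprime_basic_word_in_Uprime; rule ones)
  qed
  have l_free: "word ((gen_pow 1 i @ gen_pow 2 j @ gen_pow 1 k) @ gen_pow 2 l @ gen_pow 1 m)
      \<in> Uprime sc s1 s2 t1 t2" if "j \<in> {-2..2}" "k \<in> {-2..2}" for j k l
    by (rule word_exponent_window[where m = "-2", OF _ subspace_Uprime]) (use window that in auto)
  have kl_free: "word ((gen_pow 1 i @ gen_pow 2 j) @ gen_pow 1 k @ (gen_pow 2 l @ gen_pow 1 m))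
      \<in> Uprime sc s1 s2 t1 t2" if "j \<in> {-2..2}" for j k l
    by (rule word_exponent_window[where m = "-2", OF _ subspace_Uprime]) (use l_free that in auto)
  have "word (gen_pow 1 i @ gen_pow 2 j @ (gen_pow 1 k @ gen_pow 2 l @ gen_pow 1 m)) \<in> Uprime sc s1 s2 t1 t2"
    by (rule word_exponent_window[where m = "-2", OF _ subspace_Uprime]) (use kl_free in auto)
  then show ?thesis by simp
qed

lemma U12121_subset_Uprime: "U12121 \<subseteq> Uprime sc s1 s2 t1 t2"
proof (rule mprod_u12121_subset[OF subspace_Uprime])
  fix i1 i2 i3 i4 i5 :: nat
  show "s1 ^ i1 * s2 ^ i2 * s1 ^ i3 * s2 ^ i4 * s1 ^ i5 \<in> Uprime sc s1 s2 t1 t2"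
    using u12121_word_in_Uprime[of "int i1" "int i2" "int i3" "int i4" "int i5"]
    by (simp add: word_gen_pow_nat letter_def mult.assoc)
qed

definition Udprime_summands :: "'a set list" where
  "Udprime_summands = Uprime sc s1 s2 t1 t2 # mprod sc U1 {word [2,1,1,2,2,1,1,2]}
     # mprod sc U1 {word [-2,-1,-1,-2,-2,-1,-1,-2]} # map (\<lambda>g. sand sc U1 (word g) U1)
       [[-2,-2,1,1,-2,1,-2], [2,2,-1,-1,2,-1,2], [2,-1,-1,2,2,-1,-1,2,2], [-2,1,1,-2,-2,1,1,-2,-2]]"

lemma Udprime_eq_foldr: "Udprime sc s1 s2 t1 t2 = foldr msum Udprime_summands {0}"
  by (simp add: Udprime_def Udprime_summands_def Let_def letter_def power2_eq_square mult.assoc)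

lemma subspace_Udprime_summands: "\<forall>X\<in>set Udprime_summands. subspace X"
  by (auto simp: Udprime_summands_def sand_def subspace_mprod subspace_Uprime)

lemma subspace_Udprime: "subspace (Udprime sc s1 s2 t1 t2)"
  by (simp add: Udprime_eq_foldr subspace_foldr_msum subspace_Udprime_summands)

lemma Udprime_summand_subset: "X \<in> set Udprime_summands \<Longrightarrow> X \<subseteq> Udprime sc s1 s2 t1 t2"
  using subspace_Udprime_summands
  by (simp add: Udprime_eq_foldr summand_subset_foldr_msum subspace_0)

lemma prop44_target_subset_Udprime:
  assumes "mprod sc U1 {word (z @ z)} \<in> set Udprime_summands" and "sand sc U1 (word x) U1 \<in> set Udprime_summands"
  shows "msum (msum (mprod sc U1 {word (z @ z)}) (span {word x})) U12121 \<subseteq> Udprime sc s1 s2 t1 t2"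
proof (intro msum_subset subspace_Udprime)
  show "mprod sc U1 {word (z @ z)} \<subseteq> Udprime sc s1 s2 t1 t2"
    using assms(1) by (rule Udprime_summand_subset)
  have "word x \<in> sand sc U1 (word x) U1" using sand_memI[OF one_in_ugen one_in_ugen] by simp
  then have "span {word x} \<subseteq> sand sc U1 (word x) U1"
    by (intro span_minimal) (simp_all add: sand_def subspace_mprod)
  then show "span {word x} \<subseteq> Udprime sc s1 s2 t1 t2"
    using Udprime_summand_subset[OF assms(2)] by blast
  have "Uprime sc s1 s2 t1 t2 \<subseteq> Udprime sc s1 s2 t1 t2"
    by (rule Udprime_summand_subset) (simp add: Udprime_summands_def)
  then show "U12121 \<subseteq> Udprime sc s1 s2 t1 t2" using U12121_subset_Uprime by blast
qed

lemma prop44_basic_word_in: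
  assumes z: "z \<in> {[2,1,1,2], [-2,-1,-1,-2]}" and "prop44_basic (z @ z) x w"
  shows "word w \<in> msum (msum (mprod sc U1 {word (z @ z)}) (span {word x})) U12121"
proof -
  have zero: "0 \<in> mprod sc U1 {word (z @ z)}" "0 \<in> span {word x}" "0 \<in> U12121"
    by (simp_all add: span_zero subspace_0 subspace_mprod)
  consider "u1u2_word 2 w" | "strip1 w = z @ z" | "w = x"
    using assms(2) prop44_basic_def by blast
  then show ?thesis
  proof cases
    case 1
    then show ?thesis using zero u1u2_word_2_in_U12121 by (blast intro: msum_memI1 msum_memI2)
  next
    case 2
    obtain p q where w: "w = p @ z @ z @ q" and pq: "list_all is_letter1 p" "list_all is_letter1 q"
      using strip1_split[of w] 2 by (metis append.assoc)
    have "word (z @ z) * word q = word q * word (z @ z)"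
      using omega_commutes_letters1[OF z pq(2)] by (simp only: word_simps) (metis mult.assoc)
    then have "word w = (word p * word q) * word (z @ z)"
      unfolding w by (simp only: word_simps) (metis mult.assoc)
    moreover have "word p * word q \<in> U1"
      using pq by (intro ugen_mult_closed word_letters1_in_U1)
    ultimately have "word w \<in> mprod sc U1 {word (z @ z)}" by (simp add: mprod_memI)
    then show ?thesis using zero by (intro msum_memI1)
  next
    case 3
    then show ?thesis using zero by (blast intro: msum_memI1 msum_memI2 span_base)
  qed
qed

lemma u2_u1_word_subset:
  assumes z: "z \<in> {[2,1,1,2], [-2,-1,-1,-2]}"
    and certs: "\<And>k j. k \<in> {-2..2} \<Longrightarrow> j \<in> {-2..2} \<Longrightarrow>
      \<exists>cc. certifies (prop44_basic (z @ z) x) (gen_pow 2 k @ gen_pow 1 j @ y) cc"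
  shows "mprod sc (mprod sc U2 U1) {word y} \<subseteq> msum (msum (mprod sc U1 {word (z @ z)}) (span {word x})) U12121"
    (is "_ \<subseteq> ?S")
proof -
  have S: "subspace ?S" by (intro subspace_msum subspace_mprod subspace_span)
  have window: "word ([] @ gen_pow 2 k @ (gen_pow 1 j @ y)) \<in> ?S" if kj: "k \<in> {-2..2}" "j \<in> {-2..2}" for k j
  proof -
    obtain cc where "certifies (prop44_basic (z @ z) x) (gen_pow 2 k @ gen_pow 1 j @ y) cc"
      using certs[OF kj] by blast
    then have "word ([] @ (gen_pow 2 k @ gen_pow 1 j @ y) @ []) \<in> ?S"
      by (rule certified_word_in_subspace[OF _ S]) (simp only: append.simps append_Nil2 prop44_basic_word_in[OF z])
    then show ?thesis by simp
  qed
  have j_free: "word ((gen_pow 2 k) @ gen_pow 1 j @ y) \<in> ?S" if "k \<in> {-2..2}" for k j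
    by (rule word_exponent_window[where m = "-2", OF _ S]) (use window that in auto)
  have kj_free: "word ([] @ gen_pow 2 k @ (gen_pow 1 j @ y)) \<in> ?S" for k j
    by (rule word_exponent_window[where m = "-2", OF _ S]) (use j_free in auto)
  have monomials: "s2 ^ n * s1 ^ l * word y \<in> ?S" for n l
    using kj_free[of "int n" "int l"] by (simp add: word_gen_pow_nat letter_def mult.assoc)
  have "mprod sc (mprod sc U2 U1) {word y} \<subseteq>
      span {a * b | a b. a \<in> {a * b | a b. a \<in> range (\<lambda>n. s2 ^ n) \<and> b \<in> range (\<lambda>n. s1 ^ n)} \<and> b \<in> {word y}}"
    unfolding ugen_eq_span by (intro mprod_subset_span order.refl span_superset)
  also have "\<dots> \<subseteq> ?S" using monomials S by (intro span_minimal) auto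
  finally show ?thesis .
qed

lemma prop44_i_lhs_subset:
  "mprod sc (mprod sc U2 U1) {t2 * s1 * t2}
     \<subseteq> msum (msum (mprod sc U1 {(t2 * t1^2 * t2)^2}) (span {t2^2 * s1^2 * t2 * s1 * t2})) U12121"
proof -
  have "word [-2,1,-2] = t2 * s1 * t2" "word ([-2,-1,-1,-2] @ [-2,-1,-1,-2]) = (t2 * t1^2 * t2)^2"
    "word [-2,-2,1,1,-2,1,-2] = t2^2 * s1^2 * t2 * s1 * t2"
    by (simp_all add: letter_def power2_eq_square mult.assoc)
  with u2_u1_word_subset[of "[-2,-1,-1,-2]" "[-2,-2,1,1,-2,1,-2]" "[-2,1,-2]"] certs_i_exist
  show ?thesis by simp
qed

lemma prop44_ii_lhs_subset:
  "mprod sc (mprod sc U2 U1) {s2 * t1 * s2}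
     \<subseteq> msum (msum (mprod sc U1 {(s2 * s1^2 * s2)^2}) (span {s2^2 * t1^2 * s2 * t1 * s2})) U12121"
proof -
  have "word [2,-1,2] = s2 * t1 * s2" "word ([2,1,1,2] @ [2,1,1,2]) = (s2 * s1^2 * s2)^2"
    "word [2,2,-1,-1,2,-1,2] = s2^2 * t1^2 * s2 * t1 * s2"
    by (simp_all add: letter_def power2_eq_square mult.assoc)
  with u2_u1_word_subset[of "[2,1,1,2]" "[2,2,-1,-1,2,-1,2]" "[2,-1,2]"] certs_ii_exist
  show ?thesis by simp
qed

lemma prop44_i_rhs_subset:
  "msum (msum (mprod sc U1 {(t2 * t1^2 * t2)^2}) (span {t2^2 * s1^2 * t2 * s1 * t2})) U12121
     \<subseteq> Udprime sc s1 s2 t1 t2"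
  using prop44_target_subset_Udprime[of "[-2,-1,-1,-2]" "[-2,-2,1,1,-2,1,-2]"]
  by (simp add: Udprime_summands_def letter_def power2_eq_square mult.assoc)

lemma prop44_ii_rhs_subset:
  "msum (msum (mprod sc U1 {(s2 * s1^2 * s2)^2}) (span {s2^2 * t1^2 * s2 * t1 * s2})) U12121
     \<subseteq> Udprime sc s1 s2 t1 t2"
  using prop44_target_subset_Udprime[of "[2,1,1,2]" "[2,2,-1,-1,2,-1,2]"]
  by (simp add: Udprime_summands_def letter_def power2_eq_square mult.assoc)

end

theorem proposition4p4:
  fixes sc :: "'r::comm_ring_1 \<Rightarrow> 'a::ring_1 \<Rightarrow> 'a"
    and a b c d e :: 'r and s1 s2 t1 t2 :: 'a
  assumes "H5_setting sc a b c d e s1 s2 t1 t2"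
  defines "u1 \<equiv> ugen sc s1" and "u2 \<equiv> ugen sc s2"
    and "u12121 \<equiv> mprod sc (mprod sc (mprod sc (mprod sc (ugen sc s1) (ugen sc s2)) (ugen sc s1)) (ugen sc s2)) (ugen sc s1)"
    and "wi \<equiv> t2 * t1^2 * t2" and "w \<equiv> s2 * s1^2 * s2"
  shows "mprod sc (mprod sc u2 u1) {t2 * s1 * t2}
           \<subseteq> msum (msum (mprod sc u1 {wi^2}) (module.span sc {t2^2 * s1^2 * t2 * s1 * t2})) u12121
       \<and> msum (msum (mprod sc u1 {wi^2}) (module.span sc {t2^2 * s1^2 * t2 * s1 * t2})) u12121
           \<subseteq> Udprime sc s1 s2 t1 t2
       \<and> mprod sc (mprod sc u2 u1) {s2 * t1 * s2}
           \<subseteq> msum (msum (mprod sc u1 {w^2}) (module.span sc {s2^2 * t1^2 * s2 * t1 * s2})) u12121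
       \<and> msum (msum (mprod sc u1 {w^2}) (module.span sc {s2^2 * t1^2 * s2 * t1 * s2})) u12121
           \<subseteq> Udprime sc s1 s2 t1 t2"
proof -
  interpret H5_algebra sc a b c d e s1 s2 t1 t2 by unfold_locales (fact assms)
  show ?thesis
    unfolding u1_def u2_def u12121_def wi_def w_def
    using prop44_i_lhs_subset prop44_i_rhs_subset prop44_ii_lhs_subset prop44_ii_rhs_subset by blast
qed

end
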